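(* Let $\mathsf P'\subset\mathbb R^m$ be a $(\mu',\epsilon')$-net, $0<\Gamma_0\le1$, and let $\tau\subseteq\mathsf P'$ be a $(k+1)$-dimensional forbidden configuration. If $$0\le\delta_0\le\frac{\mu'^2\Gamma_0^k}{6},$$ then for every $p\in\tau$ we have $R(\tau_p)<\infty$, $$d\big(p,S(\tau_p)\big)\le\Big(\frac{84}{\mu'^3}\frac{\delta_0}{\Gamma_0^k}+\frac{216}{\mu'^3}\Gamma_0\Big)R(\tau_p),\qquad\text{and}\qquad R(\tau_p)<\Big(1+\frac{3\delta_0}{\mu'\Gamma_0^k}\Big)\epsilon'.$$ In particular (since $k\le m$), if $\delta_0\le\mu'^2\Gamma_0^m/6$ then $\tau$ has the $\alpha_0$-hoop property with $\alpha_0=(6/\mu')^3(\Gamma_0+\delta_0/\Gamma_0^m)$.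
   Context: Let $d(x,X)$ denote Euclidean distance from a point to a set; $B(c,r)$ is the open ball. For a finite $\mathsf P\subset\mathbb R^m$ and $\epsilon>0$, $\mathsf P$ is $\epsilon$-dense if $d(x,\mathsf P\cup\partial\,\mathrm{conv}(\mathsf P))<\epsilon$ for every $x\in\mathrm{conv}(\mathsf P)$; it is $\mu\epsilon$-separated if $\|p-q\|\ge\mu\epsilon$ for all distinct $p,q\in\mathsf P$. For $0<\mu\le1$, $\mathsf P$ is a $(\mu,\epsilon)$-net if it is $\epsilon$-dense and $\mu\epsilon$-separated. A simplex is a nonempty finite subset $\sigma\subset\mathbb R^m$ (vertices need not be affinely independent); $\dim\sigma=|\sigma|-1$; faces are nonempty subsets. For $p\in\sigma$, $\sigma_p=\sigma\setminus\{p\}$. $L(\sigma)$ is the largest distance between vertices. Altitude $D(p,\sigma)=d(p,\mathrm{aff}(\sigma_p))$. Thickness of a $j$-simplex: $\Upsilon(\sigma)=1$ if $j=0$, else $\min_{p}D(p,\sigma)/(jL(\sigma))$. $\sigma$ is $\Gamma_0$-good if every $j$-face $\sigma^j$ satisfies $\Upsilon(\sigma^j)\ge\Gamma_0^j$; $\Gamma_0$-bad otherwise; a $\Gamma_0$-flake is a $\Gamma_0$-bad simplex whose proper faces are all $\Gamma_0$-good. A circumscribing ball of $\sigma$ is an open ball whose boundary contains all vertices of $\sigma$. If one exists, the circumcentre $c(\sigma)$ and circumradius $R(\sigma)$ are the centre and radius of the smallest one (write $R(\sigma)<\infty$); otherwise $R(\sigma)=\infty$. The circumsphere is $S(\sigma)=\partial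 B(c(\sigma),R(\sigma))\cap\mathrm{aff}(\sigma)$. Forbidden configuration: given finite $\mathsf P'\subset\mathbb R^m$ and parameters $\mu',\epsilon'>0$, $0<\Gamma_0\le1$, $\delta_0\ge0$, a $(k+1)$-simplex $\tau\subseteq\mathsf P'$ with $k\le m$ is a forbidden configuration if it is a $\Gamma_0$-flake and there exist $p\in\tau$ and a circumscribing ball $B(C,R)$ of $\tau_p$ with $R<\epsilon'$ and $\big|\,\|p-C\|-R\,\big|\le\delta_0\mu'\epsilon'$. A simplex $\tau$ has the $\alpha_0$-hoop property ($\alpha_0>0$) if for every $p\in\tau$, $R(\tau_p)<\infty$ and $d(p,S(\tau_p))\le\alpha_0R(\tau_p)$. *)

theory Defs
  imports "HOL-Analysis.Analysis"
begin

text \<open>Points live in an arbitrary Euclidean space 'a; the ambient dimension m is DIM('a).\<close>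

definition eps_dense :: "real \<Rightarrow> 'a::euclidean_space set \<Rightarrow> bool" where
  "eps_dense \<epsilon> P \<longleftrightarrow>
     (\<forall>x \<in> convex hull P. infdist x (P \<union> frontier (convex hull P)) < \<epsilon>)"

definition separated :: "real \<Rightarrow> 'a::euclidean_space set \<Rightarrow> bool" where
  "separated s P \<longleftrightarrow> (\<forall>p\<in>P. \<forall>q\<in>P. p \<noteq> q \<longrightarrow> s \<le> dist p q)"

definition is_net :: "real \<Rightarrow> real \<Rightarrow> 'a::euclidean_space set \<Rightarrow> bool" where
  "is_net \<mu> \<epsilon> P \<longleftrightarrow> finite P \<and> 0 < \<epsilon> \<and> 0 < \<mu> \<and> \<mu> \<le> 1
     \<and> eps_dense \<epsilon> P \<and> separated (\<mu> * \<epsilon>) P"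

text \<open>Simplices are nonempty finite sets of points; dimension = card - 1.\<close>

definition sdim :: "'a set \<Rightarrow> nat" where
  "sdim \<sigma> = card \<sigma> - 1"

definition longest_edge :: "'a::euclidean_space set \<Rightarrow> real" where
  "longest_edge \<sigma> = diameter \<sigma>"

definition altitude :: "'a::euclidean_space \<Rightarrow> 'a set \<Rightarrow> real" where
  "altitude p \<sigma> = infdist p (affine hull (\<sigma> - {p}))"

definition thickness :: "'a::euclidean_space set \<Rightarrow> real" where
  "thickness \<sigma> = (if sdim \<sigma> = 0 then 1
     else Min ((\<lambda>p. altitude p \<sigma>) ` \<sigma>) / (real (sdim \<sigma>) * longest_edge \<sigma>))"

definition good :: "real \<Rightarrow> 'a::euclidean_space set \<Rightarrow> bool" where
  "good \<Gamma>0 \<sigma> \<longleftrightarrow> (\<forall>f. f \<subseteq> \<sigma> \<and> f \<noteq> {} \<longrightarrow> \<Gamma>0 ^ sdim f \<le> thickness f)"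

definition flake :: "real \<Rightarrow> 'a::euclidean_space set \<Rightarrow> bool" where
  "flake \<Gamma>0 \<sigma> \<longleftrightarrow> \<not> good \<Gamma>0 \<sigma> \<and> (\<forall>f. f \<subset> \<sigma> \<and> f \<noteq> {} \<longrightarrow> good \<Gamma>0 f)"

definition circ_ball :: "'a::euclidean_space set \<Rightarrow> 'a \<Rightarrow> real \<Rightarrow> bool" where
  "circ_ball \<sigma> c r \<longleftrightarrow> 0 < r \<and> (\<forall>v\<in>\<sigma>. dist c v = r)"

definition circumradius :: "'a::euclidean_space set \<Rightarrow> ereal" where
  "circumradius \<sigma> = (if \<exists>c r. circ_ball \<sigma> c r
      then ereal (Inf {r. \<exists>c. circ_ball \<sigma> c r}) else \<infinity>)"

definition circumcentre :: "'a::euclidean_space set \<Rightarrow> 'a" where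
  "circumcentre \<sigma> = (THE c. circ_ball \<sigma> c (real_of_ereal (circumradius \<sigma>)))"

definition circumsphere :: "'a::euclidean_space set \<Rightarrow> 'a set" where
  "circumsphere \<sigma> = sphere (circumcentre \<sigma>) (real_of_ereal (circumradius \<sigma>)) \<inter> affine hull \<sigma>"

definition forbidden_config ::
  "'a::euclidean_space set \<Rightarrow> real \<Rightarrow> real \<Rightarrow> real \<Rightarrow> real \<Rightarrow> nat \<Rightarrow> 'a set \<Rightarrow> bool" where
  "forbidden_config P' \<mu>' \<epsilon>' \<Gamma>0 \<delta>0 k \<tau> \<longleftrightarrow>
     \<tau> \<subseteq> P' \<and> card \<tau> = k + 2 \<and> k \<le> DIM('a) \<and> flake \<Gamma>0 \<tau> \<and>
     (\<exists>p\<in>\<tau>. \<exists>C R. circ_ball (\<tau> - {p}) C R \<and> R < \<epsilon>' \<and>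
        \<bar>dist p C - R\<bar> \<le> \<delta>0 * \<mu>' * \<epsilon>')"

definition hoop :: "real \<Rightarrow> 'a::euclidean_space set \<Rightarrow> bool" where
  "hoop \<alpha>0 \<tau> \<longleftrightarrow> (\<forall>p\<in>\<tau>. circumradius (\<tau> - {p}) < \<infinity> \<and>
      infdist p (circumsphere (\<tau> - {p})) \<le> \<alpha>0 * real_of_ereal (circumradius (\<tau> - {p})))"

end

theory Submission
  imports Defs
begin

text \<open>For \<open>q \<noteq> p\<close>, pushing the centre along the normal of the facet
  \<open>\<tau> - {p, q}\<close> towards \<open>p\<close> gives a circumscribing ball of \<open>\<tau> - {q}\<close> that is only slightly
  larger and whose sphere nearly passes through \<open>q\<close>; the shift is small because the altitude of
  \<open>p\<close> over that facet is bounded below, the faces of a flake being good. Since \<open>\<tau>\<close> itself is bad,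
  one of its altitudes is of order \<open>\<Gamma>0\<close> times its diameter, and an exchange inequality between
  altitudes spreads this to every vertex, so \<open>q\<close> is close to the affine hull of \<open>\<tau> - {q}\<close>.
  A point close to an affine hull and of small power with respect to a sphere through it is close
  to the circumsphere, which gives the hoop bound.\<close>

lemma affine_hull_orthogonal_projection:
  fixes q :: "'a::euclidean_space"
  assumes "S \<noteq> {}"
  obtains q' where "q' \<in> affine hull S" "dist q q' = infdist q (affine hull S)"
    "\<And>a b. a \<in> affine hull S \<Longrightarrow> b \<in> affine hull S \<Longrightarrow> (q - q') \<bullet> (a - b) = 0"
proof
  let ?A = "affine hull S"
  define c where "c = closest_point ?A q"
  have A: "convex ?A" "closed ?A" "?A \<noteq> {}"
    using assms by (simp_all add: affine_imp_convex)
  show c: "c \<in> ?A" unfolding c_def using closest_point_in_set[OF A(2,3)] .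
  show "dist q c = infdist q ?A"
    using setdist_closest_point[OF A(2,3)] by (simp add: c_def infdist_eq_setdist)
  have orth: "(q - c) \<bullet> (a - c) = 0" if a: "a \<in> ?A" for a
  proof -
    \<comment> \<open>the reflection of \<open>a\<close> in \<open>c\<close> also lies in the affine hull\<close>
    have "c + 1 *\<^sub>R (c - a) \<in> ?A"
      using mem_affine_3_minus[OF affine_affine_hull c c a] .
    from closest_point_dot[OF A(1,2) this, of q] closest_point_dot[OF A(1,2) a, of q]
    have "(q - c) \<bullet> (c - a) \<le> 0" "(q - c) \<bullet> (a - c) \<le> 0"
      by (simp_all add: c_def)
    moreover have "(q - c) \<bullet> (c - a) = - ((q - c) \<bullet> (a - c))" by (simp add: inner_diff_right)
    ultimately show ?thesis by linarith
  qed
  show "(q - c) \<bullet> (a - b) = 0" if "a \<in> ?A" "b \<in> ?A" for a b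
    using orth[OF that(1)] orth[OF that(2)] by (simp add: inner_diff_right)
qed

lemma equidistant_affine_hull_unique:
  fixes c1 c2 :: "'a::euclidean_space"
  assumes "c1 \<in> affine hull S" "c2 \<in> affine hull S"
    and "\<And>v. v \<in> S \<Longrightarrow> dist c1 v = r1" "\<And>v. v \<in> S \<Longrightarrow> dist c2 v = r2"
  shows "c1 = c2"
proof -
  define d where "d = c1 - c2"
  define K where "K = (c1 \<bullet> c1 - c2 \<bullet> c2 - r1^2 + r2^2) / 2"
  \<comment> \<open>\<open>S\<close> lies in the radical hyperplane of the two spheres\<close>
  have "d \<bullet> v = K" if "v \<in> S" for v
  proof -
    have "(c1 - v) \<bullet> (c1 - v) = r1^2" "(c2 - v) \<bullet> (c2 - v) = r2^2"
      using assms(3,4)[OF that] by (simp_all add: dist_norm flip: power2_norm_eq_inner)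
    then show ?thesis
      by (simp add: d_def K_def inner_diff_left inner_diff_right inner_commute algebra_simps)
  qed
  then have "affine hull S \<subseteq> {x. d \<bullet> x = K}"
    by (intro hull_minimal affine_hyperplane) auto
  then have "d \<bullet> c1 = K" "d \<bullet> c2 = K" using assms(1,2) by auto
  then have "d \<bullet> d = 0" by (simp add: d_def inner_diff_right)
  then show ?thesis by (simp add: d_def)
qed

lemma circ_ball_project_centre:
  fixes S :: "'a::euclidean_space set"
  assumes "circ_ball S c r" "S \<noteq> {}"
  obtains c' where "c' \<in> affine hull S"
    "\<And>a b. a \<in> affine hull S \<Longrightarrow> b \<in> affine hull S \<Longrightarrow> (c - c') \<bullet> (a - b) = 0"
    "\<And>v. v \<in> S \<Longrightarrow> r^2 = (dist c c')^2 + (dist c' v)^2"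
proof -
  obtain c' where c': "c' \<in> affine hull S"
    "\<And>a b. a \<in> affine hull S \<Longrightarrow> b \<in> affine hull S \<Longrightarrow> (c - c') \<bullet> (a - b) = 0"
    using affine_hull_orthogonal_projection[OF assms(2)] by blast
  have "r^2 = (dist c c')^2 + (dist c' v)^2" if v: "v \<in> S" for v
  proof -
    have "orthogonal (c - c') (c' - v)"
      using c'(1,2) hull_inc[OF v] by (simp add: orthogonal_def)
    from norm_add_Pythagorean[OF this] have "norm (c - v)^2 = norm (c - c')^2 + norm (c' - v)^2"
      by simp
    then show ?thesis using assms(1) v by (simp add: circ_ball_def dist_norm)
  qed
  then show ?thesis using that c' by blast
qed

lemma circ_ball_circumcentre:
  fixes S :: "'a::euclidean_space set"
  assumes "v1 \<in> S" "v2 \<in> S" "v1 \<noteq> v2" "circ_ball S C r"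
  obtains cs rs where "cs \<in> affine hull S" "0 < rs" "\<And>v. v \<in> S \<Longrightarrow> dist cs v = rs"
    "\<And>a b. a \<in> affine hull S \<Longrightarrow> b \<in> affine hull S \<Longrightarrow> (C - cs) \<bullet> (a - b) = 0"
    "r^2 = (dist C cs)^2 + rs^2"
    "circumradius S = ereal rs" "circumcentre S = cs"
proof -
  have S: "S \<noteq> {}" using assms(1) by auto
  obtain cs where cs: "cs \<in> affine hull S"
    "\<And>a b. a \<in> affine hull S \<Longrightarrow> b \<in> affine hull S \<Longrightarrow> (C - cs) \<bullet> (a - b) = 0"
    "\<And>v. v \<in> S \<Longrightarrow> r^2 = (dist C cs)^2 + (dist cs v)^2"
    by (rule circ_ball_project_centre[OF assms(4) S], rule that)
  define rs where "rs = dist cs v1"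
  have dist_cs: "dist cs v = rs" if "v \<in> S" for v
    using cs(3)[OF that] cs(3)[OF assms(1)] by (simp add: rs_def power2_eq_iff_nonneg)
  have rs: "0 < rs"
    using dist_cs[OF assms(1)] dist_cs[OF assms(2)] assms(3) by (auto simp: rs_def)
  have cb: "circ_ball S cs rs" unfolding circ_ball_def using rs dist_cs by blast
  have other: "r'^2 = (dist c cs)^2 + rs^2" if cb': "circ_ball S c r'" for c r'
  proof -
    obtain c' where c': "c' \<in> affine hull S"
      "\<And>v. v \<in> S \<Longrightarrow> r'^2 = (dist c c')^2 + (dist c' v)^2"
      by (rule circ_ball_project_centre[OF cb' S], rule that)
    have "c' = cs"
    proof (rule equidistant_affine_hull_unique[OF c'(1) cs(1)])
      show "dist c' v = sqrt (r'^2 - (dist c c')^2)" if "v \<in> S" for v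
        using c'(2)[OF that] by simp
      show "dist cs v = rs" if "v \<in> S" for v
        using dist_cs[OF that] .
    qed
    then show ?thesis using c'(2)[OF assms(1)] dist_cs[OF assms(1)] by simp
  qed
  have "Inf {r. \<exists>c. circ_ball S c r} = rs"
  proof (rule cInf_eq_minimum)
    show "rs \<in> {r. \<exists>c. circ_ball S c r}" using cb by blast
    fix x assume "x \<in> {r. \<exists>c. circ_ball S c r}"
    then obtain c where c: "circ_ball S c x" by blast
    then have "rs^2 \<le> x^2" "0 < x" using other[OF c] by (auto simp: circ_ball_def)
    then show "rs \<le> x" using power2_le_imp_le[of rs x] by linarith
  qed
  then have cr: "circumradius S = ereal rs" using cb by (auto simp: circumradius_def)
  have "circumcentre S = cs"
    unfolding circumcentre_def cr real_of_ereal.simps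
  proof (rule the_equality)
    fix c assume "circ_ball S c rs"
    from other[OF this] show "c = cs" by simp
  qed (rule cb)
  moreover have "r^2 = (dist C cs)^2 + rs^2"
    using cs(3)[OF assms(1)] dist_cs[OF assms(1)] by simp
  ultimately show ?thesis using that cs(1,2) rs dist_cs cr by blast
qed

lemma infdist_affine_hull_insert_gram_le:
  fixes q s q0 s0 :: "'a::euclidean_space"
  assumes "q0 \<in> affine hull G" "s0 \<in> affine hull G"
  defines "x \<equiv> s - s0" and "y \<equiv> q - q0"
  shows "(infdist q (affine hull (insert s G)) * norm x)^2 \<le> (x \<bullet> x) * (y \<bullet> y) - (x \<bullet> y)^2"
proof (cases "x = 0")
  case False
  then have xx: "0 < x \<bullet> x" by simp
  define l where "l = (x \<bullet> y) / (x \<bullet> x)"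
  have "q0 + l *\<^sub>R (s - s0) \<in> affine hull (insert s G)"
    using assms(1,2) hull_mono[of G "insert s G"] hull_inc[of s "insert s G"]
    by (intro mem_affine_3_minus) auto
  then have "infdist q (affine hull (insert s G)) \<le> norm (y - l *\<^sub>R x)"
    using infdist_le by (fastforce simp: dist_norm x_def y_def algebra_simps)
  moreover have "(norm (y - l *\<^sub>R x))^2 = y \<bullet> y - 2 * l * (x \<bullet> y) + l * l * (x \<bullet> x)"
    by (simp add: power2_norm_eq_inner inner_diff_left inner_diff_right inner_commute algebra_simps)
  moreover have "\<dots> = ((x \<bullet> x) * (y \<bullet> y) - (x \<bullet> y)^2) / (x \<bullet> x)"
    using xx by (simp add: l_def field_simps power2_eq_square)
  ultimately have "(infdist q (affine hull (insert s G)))^2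
      \<le> ((x \<bullet> x) * (y \<bullet> y) - (x \<bullet> y)^2) / (x \<bullet> x)"
    by (metis infdist_nonneg power_mono)
  then show ?thesis
    using xx by (simp add: power_mult_distrib power2_norm_eq_inner field_simps)
qed simp

lemma gram_le_infdist_affine_hull_insert:
  fixes q s q0 s0 :: "'a::euclidean_space"
  assumes "q0 \<in> affine hull G" "s0 \<in> affine hull G"
    and "\<And>a b. a \<in> affine hull G \<Longrightarrow> b \<in> affine hull G \<Longrightarrow> (q - q0) \<bullet> (a - b) = 0"
    and "\<And>a b. a \<in> affine hull G \<Longrightarrow> b \<in> affine hull G \<Longrightarrow> (s - s0) \<bullet> (a - b) = 0"
  defines "x \<equiv> s - s0" and "y \<equiv> q - q0"
  shows "(x \<bullet> x) * (y \<bullet> y) - (x \<bullet> y)^2 \<le> (infdist s (affine hull (insert q G)) * norm y)^2"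
proof (cases "y = 0")
  case False
  then have yy: "0 < y \<bullet> y" by simp
  \<comment> \<open>the component of \<open>x\<close> orthogonal to \<open>y\<close> is normal to the affine hull of \<open>insert q G\<close>\<close>
  define n where "n = x - ((x \<bullet> y) / (y \<bullet> y)) *\<^sub>R y"
  have ny: "n \<bullet> y = 0" using yy by (simp add: n_def inner_diff_left)
  have nx: "n \<bullet> x = n \<bullet> n" using ny by (simp add: n_def inner_diff_right inner_diff_left inner_commute)
  have nG: "n \<bullet> (a - b) = 0" if "a \<in> affine hull G" "b \<in> affine hull G" for a b
    using assms(3,4)[OF that] by (simp add: n_def x_def y_def inner_diff_left)
  have gram: "(n \<bullet> n) * (y \<bullet> y) = (x \<bullet> x) * (y \<bullet> y) - (x \<bullet> y)^2" using yy
    by (simp add: n_def inner_diff_left inner_diff_right inner_commute field_simps power2_eq_square)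
  have "n \<bullet> z = n \<bullet> q0" if "z \<in> insert q G" for z
    using that ny nG[OF hull_inc assms(1)] by (auto simp: y_def inner_diff_right)
  then have "insert q G \<subseteq> {z. n \<bullet> z = n \<bullet> q0}" by blast
  then have hyperplane: "affine hull (insert q G) \<subseteq> {z. n \<bullet> z = n \<bullet> q0}"
    by (intro hull_minimal affine_hyperplane)
  have "norm n \<le> infdist s (affine hull (insert q G))"
  proof (cases "n = 0")
    case False
    obtain z where z: "z \<in> affine hull (insert q G)" "infdist s (affine hull (insert q G)) = dist s z"
      using infdist_attains_inf[OF closed_affine_hull, of "insert q G" s] by auto
    have "n \<bullet> (s - z) = n \<bullet> x + n \<bullet> (s0 - q0)"
      using hyperplane z(1) by (auto simp: x_def inner_diff_right)
    then have "n \<bullet> (s - z) = norm n * norm n"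
      using nx nG[OF assms(2,1)] by (simp add: norm_eq_sqrt_inner)
    then have "norm n * norm n \<le> norm n * norm (s - z)"
      using norm_cauchy_schwarz[of n "s - z"] by simp
    then show ?thesis using False z(2) by (simp add: dist_norm)
  qed (simp add: infdist_nonneg)
  then have "(norm n)^2 * (y \<bullet> y) \<le> (infdist s (affine hull (insert q G)))^2 * (y \<bullet> y)"
    using yy by (intro mult_right_mono power_mono) auto
  then show ?thesis
    using gram by (simp add: power_mult_distrib power2_norm_eq_inner)
qed simp

text \<open>Both sides equal the area of the parallelogram spanned by the components of \<open>q\<close> and \<open>s\<close>
  normal to \<open>affine hull G\<close>; only the inequality is needed.\<close>

lemma infdist_affine_hull_insert_exchange:
  fixes q s :: "'a::euclidean_space"
  assumes "G \<noteq> {}"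
  shows "infdist q (affine hull (insert s G)) * infdist s (affine hull G)
       \<le> infdist s (affine hull (insert q G)) * infdist q (affine hull G)"
proof -
  obtain q0 where q0: "q0 \<in> affine hull G" "dist q q0 = infdist q (affine hull G)"
      "\<And>a b. a \<in> affine hull G \<Longrightarrow> b \<in> affine hull G \<Longrightarrow> (q - q0) \<bullet> (a - b) = 0"
    by (rule affine_hull_orthogonal_projection[OF assms], rule that)
  obtain s0 where s0: "s0 \<in> affine hull G" "dist s s0 = infdist s (affine hull G)"
      "\<And>a b. a \<in> affine hull G \<Longrightarrow> b \<in> affine hull G \<Longrightarrow> (s - s0) \<bullet> (a - b) = 0"
    by (rule affine_hull_orthogonal_projection[OF assms], rule that)
  have "(infdist q (affine hull (insert s G)) * norm (s - s0))^2
      \<le> (infdist s (affine hull (insert q G)) * norm (q - q0))^2"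
    using infdist_affine_hull_insert_gram_le[OF q0(1) s0(1), of q s]
      gram_le_infdist_affine_hull_insert[OF q0(1) s0(1) q0(3) s0(3)] by linarith
  then have "infdist q (affine hull (insert s G)) * norm (s - s0)
      \<le> infdist s (affine hull (insert q G)) * norm (q - q0)"
    by (rule power2_le_imp_le) (simp add: infdist_nonneg)
  then show ?thesis using q0(2) s0(2) by (simp add: dist_norm)
qed

lemma dist_translate_unit_sq:
  fixes C u x :: "'a::real_inner"
  assumes "norm u = 1"
  shows "(dist (C + t *\<^sub>R u) x)^2 = (dist C x)^2 + 2 * t * (u \<bullet> (C - x)) + t^2"
proof -
  have "(C + t *\<^sub>R u - x) \<bullet> (C + t *\<^sub>R u - x) = (C - x) \<bullet> (C - x) + 2 * t * (u \<bullet> (C - x)) + t^2 * (u \<bullet> u)"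
    by (simp add: inner_add_left inner_add_right inner_diff_left inner_diff_right
        inner_commute power2_eq_square algebra_simps)
  moreover have "u \<bullet> u = 1" using assms by (simp add: norm_eq_1)
  ultimately show ?thesis by (simp add: dist_norm power2_norm_eq_inner)
qed

lemma le_add_abs_of_power2_eq:
  fixes r R t a :: real
  assumes "r^2 = R^2 + 2 * t * a + t^2" "\<bar>a\<bar> \<le> R"
  shows "r \<le> R + \<bar>t\<bar>"
proof (rule power2_le_imp_le)
  have "t * a \<le> \<bar>t\<bar> * R"
    using mult_left_mono[OF assms(2), of "\<bar>t\<bar>"] abs_ge_self[of "t * a"] by (simp add: abs_mult)
  then show "r^2 \<le> (R + \<bar>t\<bar>)^2"
    using assms(1) by (simp add: power2_eq_square algebra_simps)
  show "0 \<le> R + \<bar>t\<bar>" using assms(2) by linarith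
qed

text \<open>Moving the centre of a sphere through \<open>F\<close> along the normal of \<open>affine hull F\<close> towards
  \<open>p\<close> yields a sphere through \<open>insert p F\<close>; the shift is controlled by the power \<open>\<pi>\<close> of \<open>p\<close>
  with respect to the original sphere.\<close>

lemma equidistant_insert_point:
  fixes F :: "'a::euclidean_space set"
  assumes "F \<noteq> {}" "\<And>v. v \<in> F \<Longrightarrow> dist C v = R" "0 < infdist p (affine hull F)"
  defines "\<pi> \<equiv> (dist C p)^2 - R^2" and "D \<equiv> infdist p (affine hull F)"
  obtains C' r where "0 < r" "\<And>v. v \<in> insert p F \<Longrightarrow> dist C' v = r"
    "r \<le> R + \<bar>\<pi>\<bar> / (2 * D)"
    "\<And>x v. v \<in> F \<Longrightarrow> \<bar>((dist C' x)^2 - r^2) - ((dist C x)^2 - R^2)\<bar> \<le> \<bar>\<pi>\<bar> / D * dist v x"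
proof -
  have D: "0 < D" using assms(3) by (simp add: D_def)
  obtain p' where p': "p' \<in> affine hull F" "dist p p' = infdist p (affine hull F)"
      "\<And>a b. a \<in> affine hull F \<Longrightarrow> b \<in> affine hull F \<Longrightarrow> (p - p') \<bullet> (a - b) = 0"
    by (rule affine_hull_orthogonal_projection[OF assms(1)], rule that)
  have pp': "dist p p' = D" using p'(2) by (simp add: D_def)
  define u where "u = (1 / D) *\<^sub>R (p - p')"
  define t where "t = \<pi> / (2 * D)"
  define C' where "C' = C + t *\<^sub>R u"
  have nu: "norm u = 1" using D pp' by (simp add: u_def dist_norm)
  have up: "u \<bullet> (p - p') = D"
    using D pp' by (simp add: u_def dist_norm power2_eq_square flip: power2_norm_eq_inner)
  have uF: "u \<bullet> (a - b) = 0" if "a \<in> affine hull F" "b \<in> affine hull F" for a b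
    using p'(3)[OF that] by (simp add: u_def)
  obtain v0 where v0: "v0 \<in> F" using assms(1) by blast
  define a0 where "a0 = u \<bullet> (C - v0)"
  have shift: "(dist C' x)^2 - (R^2 + 2 * t * a0 + t^2) = ((dist C x)^2 - R^2) + 2 * t * (u \<bullet> (v - x))"
    if v: "v \<in> F" for x v
  proof -
    have "u \<bullet> (C - x) = a0 + u \<bullet> (v - x)"
      using uF[OF hull_inc[OF v] hull_inc[OF v0]] by (simp add: a0_def inner_diff_right)
    then show ?thesis using dist_translate_unit_sq[OF nu, of C t x] by (simp add: C'_def algebra_simps)
  qed
  define r where "r = dist C' v0"
  have r2: "r^2 = R^2 + 2 * t * a0 + t^2"
    using shift[OF v0, of v0] assms(2)[OF v0] by (simp add: r_def)
  have "(dist C' v)^2 = r^2" if "v \<in> insert p F" for v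
  proof (cases "v = p")
    case True
    have "u \<bullet> (v0 - p) = - D"
      using up uF[OF hull_inc[OF v0] p'(1)] by (simp add: inner_diff_right)
    then have "2 * t * (u \<bullet> (v0 - p)) = - (2 * t * D)" by simp
    moreover have "2 * t * D = (dist C p)^2 - R^2" using D by (simp add: t_def \<pi>_def)
    ultimately show ?thesis
      using shift[OF v0, of p] unfolding True r2 by linarith
  next
    case False
    then show ?thesis using shift[of v v] that assms(2) r2 by simp
  qed
  then have dist_C': "dist C' v = r" if "v \<in> insert p F" for v
    using that by (simp add: r_def power2_eq_iff_nonneg)
  have "v0 \<in> affine hull F" using v0 by (rule hull_inc)
  then have "p \<noteq> v0" using assms(3) infdist_zero[of p "affine hull F"] by auto
  then have "0 < dist p v0" by simp
  also have "dist p v0 \<le> dist p C' + dist v0 C'" by (rule dist_triangle2)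
  finally have r: "0 < r" using dist_C'[of p] dist_C'[of v0] v0 by (simp add: dist_commute)
  have "\<bar>a0\<bar> \<le> R"
    using Cauchy_Schwarz_ineq2[of u "C - v0"] nu assms(2)[OF v0] by (simp add: a0_def dist_norm)
  with r2 have "r \<le> R + \<bar>t\<bar>" by (rule le_add_abs_of_power2_eq)
  show ?thesis
  proof (rule that[OF r dist_C'])
    show "r \<le> R + \<bar>\<pi>\<bar> / (2 * D)"
      using \<open>r \<le> R + \<bar>t\<bar>\<close> D by (simp add: t_def abs_divide)
    fix x v assume v: "v \<in> F"
    have "\<bar>u \<bullet> (v - x)\<bar> \<le> dist v x"
      using Cauchy_Schwarz_ineq2[of u "v - x"] nu by (simp add: dist_norm)
    then have "\<bar>2 * t * (u \<bullet> (v - x))\<bar> \<le> 2 * \<bar>t\<bar> * dist v x"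
      by (simp add: abs_mult mult_left_mono)
    moreover have "((dist C' x)^2 - r^2) - ((dist C x)^2 - R^2) = 2 * t * (u \<bullet> (v - x))"
      unfolding r2 using shift[OF v, of x] by linarith
    moreover have "2 * \<bar>t\<bar> = \<bar>\<pi>\<bar> / D" using D by (simp add: t_def abs_divide)
    ultimately show "\<bar>((dist C' x)^2 - r^2) - ((dist C x)^2 - R^2)\<bar> \<le> \<bar>\<pi>\<bar> / D * dist v x"
      by simp
  qed
qed

lemma infdist_sphere_inter_affine_hull_le:
  fixes c q q' :: "'a::euclidean_space"
  assumes "c \<in> affine hull S" "v \<in> affine hull S" "dist c v = \<rho>" "q' \<in> affine hull S"
  shows "infdist q (sphere c \<rho> \<inter> affine hull S) \<le> dist q q' + \<bar>dist c q' - \<rho>\<bar>"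
proof -
  have "0 \<le> \<rho>" using assms(3) by auto
  obtain z where z: "z \<in> sphere c \<rho> \<inter> affine hull S" "dist q' z = \<bar>dist c q' - \<rho>\<bar>"
  proof (cases "q' = c")
    case True
    then show ?thesis using that[of v] assms(2,3) \<open>0 \<le> \<rho>\<close> by (simp add: dist_commute)
  next
    case False
    define z where "z = c + (\<rho> / dist c q') *\<^sub>R (q' - c)"
    have "z \<in> affine hull S"
      unfolding z_def by (rule mem_affine_3_minus[OF affine_affine_hull assms(1,4,1)])
    moreover have "dist c z = \<rho>"
      using False \<open>0 \<le> \<rho>\<close> by (simp add: z_def dist_norm norm_minus_commute)
    moreover have "q' - z = (1 - \<rho> / dist c q') *\<^sub>R (q' - c)" by (simp add: z_def algebra_simps)
    then have "dist q' z = \<bar>(1 - \<rho> / dist c q') * dist c q'\<bar>"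
      by (simp add: dist_norm abs_mult norm_minus_commute)
    moreover have "(1 - \<rho> / dist c q') * dist c q' = dist c q' - \<rho>"
      using False by (simp add: field_simps)
    ultimately show ?thesis using that[of z] by simp
  qed
  have "infdist q (sphere c \<rho> \<inter> affine hull S) \<le> dist q z" using z(1) by (rule infdist_le)
  also have "\<dots> \<le> dist q q' + dist q' z" by (rule dist_triangle)
  finally show ?thesis using z(2) by simp
qed

lemma abs_inner_self_diff_le:
  fixes w n :: "'a::real_inner"
  shows "\<bar>w \<bullet> w - (w - n) \<bullet> (w - n)\<bar> \<le> 2 * norm w * norm n + (norm n)^2"
proof -
  have "w \<bullet> w - (w - n) \<bullet> (w - n) = 2 * (w \<bullet> n) - n \<bullet> n"
    by (simp add: inner_diff_left inner_diff_right inner_commute)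
  moreover have "n \<bullet> n = (norm n)^2" by (simp add: power2_norm_eq_inner)
  ultimately show ?thesis using Cauchy_Schwarz_ineq2[of w n] zero_le_power2[of "norm n"] by arith
qed

lemma mult_abs_diff_le_abs_diff_power2:
  fixes a b :: real
  assumes "0 \<le> a" "0 \<le> b"
  shows "b * \<bar>a - b\<bar> \<le> \<bar>a^2 - b^2\<bar>"
proof -
  have "b * \<bar>a - b\<bar> \<le> (a + b) * \<bar>a - b\<bar>" using assms by (intro mult_right_mono) auto
  also have "\<dots> = \<bar>(a + b) * (a - b)\<bar>" using assms by (simp add: abs_mult)
  also have "(a + b) * (a - b) = a^2 - b^2" by (simp add: power2_eq_square algebra_simps)
  finally show ?thesis .
qed

lemma circumradius_mult_infdist_circumsphere_le:
  fixes S :: "'a::euclidean_space set" and q :: 'a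
  assumes "v1 \<in> S" "v2 \<in> S" "v1 \<noteq> v2" "circ_ball S C r"
  defines "\<rho> \<equiv> real_of_ereal (circumradius S)" and "h \<equiv> infdist q (affine hull S)"
  shows "\<rho> * infdist q (circumsphere S) \<le> h * (\<rho> + 2 * r + h) + \<bar>(dist C q)^2 - r^2\<bar>"
proof -
  obtain cs rs where cs: "cs \<in> affine hull S" "0 < rs" "\<And>v. v \<in> S \<Longrightarrow> dist cs v = rs"
    "\<And>a b. a \<in> affine hull S \<Longrightarrow> b \<in> affine hull S \<Longrightarrow> (C - cs) \<bullet> (a - b) = 0"
    "r^2 = (dist C cs)^2 + rs^2" "circumradius S = ereal rs" "circumcentre S = cs"
    by (rule circ_ball_circumcentre[OF assms(1-4)], rule that)
  have \<rho>: "\<rho> = rs" using cs(6) by (simp add: \<rho>_def)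
  have "S \<noteq> {}" using assms(1) by auto
  obtain q' where q': "q' \<in> affine hull S" "dist q q' = infdist q (affine hull S)"
      "\<And>a b. a \<in> affine hull S \<Longrightarrow> b \<in> affine hull S \<Longrightarrow> (q - q') \<bullet> (a - b) = 0"
    by (rule affine_hull_orthogonal_projection[OF \<open>S \<noteq> {}\<close>], rule that)
  have qh: "dist q q' = h" using q'(2) by (simp add: h_def)
  \<comment> \<open>decompose \<open>C - q\<close> into the parts normal and parallel to the affine hull\<close>
  define w where "w = C - cs"
  define n where "n = q - q'"
  define e where "e = q' - cs"
  have "w \<bullet> e = 0" "n \<bullet> e = 0"
    using cs(4)[OF q'(1) cs(1)] q'(3)[OF q'(1) cs(1)] by (simp_all add: w_def n_def e_def)
  then have "(dist C q)^2 = (w - n) \<bullet> (w - n) + e \<bullet> e"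
    by (simp add: dist_norm power2_norm_eq_inner w_def n_def e_def inner_diff_left inner_diff_right
        inner_commute algebra_simps)
  moreover have "r^2 = w \<bullet> w + rs^2" using cs(5) by (simp add: w_def dist_norm power2_norm_eq_inner)
  moreover have "\<bar>w \<bullet> w - (w - n) \<bullet> (w - n)\<bar> \<le> 2 * r * h + h^2"
  proof -
    have "norm w \<le> r"
      using cs(5) assms(4) power2_le_imp_le[of "norm w" r]
      by (auto simp: w_def dist_norm circ_ball_def)
    moreover have "norm n = h" using qh by (simp add: n_def dist_norm)
    ultimately have "norm w * norm n \<le> r * h" by (metis mult_right_mono norm_ge_zero)
    then show ?thesis using abs_inner_self_diff_le[of w n] \<open>norm n = h\<close> by simp
  qed
  ultimately have "\<bar>(norm e)^2 - rs^2\<bar> \<le> \<bar>(dist C q)^2 - r^2\<bar> + 2 * r * h + h^2"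
    by (simp add: power2_norm_eq_inner)
  moreover have "rs * \<bar>norm e - rs\<bar> \<le> \<bar>(norm e)^2 - rs^2\<bar>"
    using cs(2) by (intro mult_abs_diff_le_abs_diff_power2) auto
  moreover have sphere: "infdist q (circumsphere S) \<le> h + \<bar>norm e - rs\<bar>"
  proof -
    have "norm e = dist cs q'" by (simp add: e_def dist_norm norm_minus_commute)
    then show ?thesis
      using infdist_sphere_inter_affine_hull_le[OF cs(1) hull_inc[OF assms(1)] cs(3)[OF assms(1)] q'(1),
          of q] qh
      by (simp add: circumsphere_def cs(6,7))
  qed
  moreover have "rs * infdist q (circumsphere S) \<le> rs * h + rs * \<bar>norm e - rs\<bar>"
    using mult_left_mono[OF sphere, of rs] cs(2) by (simp add: distrib_left)
  moreover have "h * (rs + 2 * r + h) = rs * h + 2 * r * h + h^2"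
    by (simp add: power2_eq_square algebra_simps)
  ultimately show ?thesis unfolding \<rho> by linarith
qed

lemma good_altitude_ge:
  fixes \<sigma> :: "'a::euclidean_space set"
  assumes "good \<Gamma> \<sigma>" "finite \<sigma>" "card \<sigma> = k + 1" "1 \<le> k" "v \<in> \<sigma>"
  shows "real k * diameter \<sigma> * \<Gamma>^k \<le> altitude v \<sigma>"
proof -
  have "card (\<sigma> - {v}) = k" using assms(2,3,5) by simp
  then have "\<sigma> - {v} \<noteq> {}" using assms(4) by (metis card.empty not_one_le_zero)
  then obtain w where w: "w \<in> \<sigma>" "w \<noteq> v" by blast
  have "0 < diameter \<sigma>"
    using diameter_bounded_bound[OF finite_imp_bounded[OF assms(2)] assms(5) w(1)] w(2)
    by (metis dist_pos_lt order_less_le_trans)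
  moreover have "\<Gamma>^k \<le> thickness \<sigma>"
    using assms(1,3,5) unfolding good_def by (auto simp: sdim_def)
  moreover have "thickness \<sigma> = Min ((\<lambda>p. altitude p \<sigma>) ` \<sigma>) / (real k * diameter \<sigma>)"
    using assms(3,4) by (simp add: thickness_def sdim_def longest_edge_def)
  moreover have "Min ((\<lambda>p. altitude p \<sigma>) ` \<sigma>) \<le> altitude v \<sigma>"
    using assms(2,5) by (intro Min_le) auto
  ultimately show ?thesis
    using assms(4) by (simp add: le_divide_eq algebra_simps)
qed

lemma good_pow_le:
  fixes \<sigma> :: "'a::euclidean_space set"
  assumes "good \<Gamma> \<sigma>" "finite \<sigma>" "card \<sigma> = k + 1" "1 \<le> k" "v \<in> \<sigma>" "w \<in> \<sigma>" "v \<noteq> w"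
  shows "real k * \<Gamma>^k \<le> 1"
proof -
  have "altitude v \<sigma> \<le> dist v w"
    unfolding altitude_def using assms(6,7) by (intro infdist_le hull_inc) auto
  also have "\<dots> \<le> diameter \<sigma>"
    using diameter_bounded_bound[OF finite_imp_bounded[OF assms(2)] assms(5,6)] .
  finally have "real k * \<Gamma>^k * diameter \<sigma> \<le> 1 * diameter \<sigma>"
    using good_altitude_ge[OF assms(1-5)] by (simp add: algebra_simps)
  moreover have "0 < diameter \<sigma>"
    using \<open>dist v w \<le> diameter \<sigma>\<close> assms(7) by (metis dist_pos_lt order_less_le_trans)
  ultimately show ?thesis by simp
qed

lemma flake_thin_vertex:
  fixes \<tau> :: "'a::euclidean_space set"
  assumes "flake \<Gamma> \<tau>" "finite \<tau>" "card \<tau> = k + 2" "0 < diameter \<tau>"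
  obtains s where "s \<in> \<tau>" "altitude s \<tau> < real (k + 1) * diameter \<tau> * \<Gamma>^(k + 1)"
proof -
  obtain f where f: "f \<subseteq> \<tau>" "f \<noteq> {}" "\<not> \<Gamma>^sdim f \<le> thickness f"
    using assms(1) unfolding flake_def good_def by blast
  \<comment> \<open>all proper faces of a flake are good, so the bad face is \<open>\<tau>\<close> itself\<close>
  have "f = \<tau>" using assms(1) f unfolding flake_def good_def by blast
  then have "Min ((\<lambda>p. altitude p \<tau>) ` \<tau>) / (real (k + 1) * diameter \<tau>) < \<Gamma>^(k + 1)"
    using f(3) assms(3) by (simp add: thickness_def sdim_def longest_edge_def)
  then have "Min ((\<lambda>p. altitude p \<tau>) ` \<tau>) < \<Gamma>^(k + 1) * (real (k + 1) * diameter \<tau>)"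
    using assms(4) by (simp only: divide_less_eq) simp
  then have "Min ((\<lambda>p. altitude p \<tau>) ` \<tau>) < real (k + 1) * diameter \<tau> * \<Gamma>^(k + 1)"
    by (simp only: mult_ac)
  moreover have "Min ((\<lambda>p. altitude p \<tau>) ` \<tau>) \<in> (\<lambda>p. altitude p \<tau>) ` \<tau>"
    using assms(2) f(2) \<open>f = \<tau>\<close> by (intro Min_in) auto
  ultimately show ?thesis using that by auto
qed

lemma flake_card_ne_2:
  fixes \<tau> :: "'a::euclidean_space set"
  assumes "flake \<Gamma> \<tau>" "\<Gamma> \<le> 1"
  shows "card \<tau> \<noteq> 2"
proof
  assume "card \<tau> = 2"
  then obtain a b where ab: "\<tau> = {a, b}" "a \<noteq> b" unfolding card_2_iff by blast
  have "\<Gamma>^sdim f \<le> thickness f" if f: "f \<subseteq> \<tau>" "f \<noteq> {}" for f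
  proof (cases "f = \<tau>")
    case True
    have "altitude a \<tau> = dist a b" "altitude b \<tau> = dist a b"
      using ab by (auto simp: altitude_def insert_Diff_if dist_commute)
    moreover have "diameter \<tau> = dist a b"
    proof (rule antisym)
      show "diameter \<tau> \<le> dist a b"
        using ab by (intro diameter_le) (auto simp: dist_norm[symmetric] dist_commute)
      show "dist a b \<le> diameter \<tau>"
        using ab by (intro diameter_bounded_bound) auto
    qed
    ultimately have "thickness \<tau> = 1"
      using ab by (simp add: thickness_def sdim_def longest_edge_def)
    then show ?thesis using True ab assms(2) by (simp add: sdim_def)
  next
    case False
    then have "f = {a} \<or> f = {b}" using f ab by blast
    then have "card f = 1" by auto
    then show ?thesis by (simp add: sdim_def thickness_def)
  qed
  then have "good \<Gamma> \<tau>" unfolding good_def by blast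
  then show False using assms(1) unfolding flake_def by blast
qed

locale forbidden_flake =
  fixes \<tau> :: "'a::euclidean_space set" and \<mu> \<epsilon> \<Gamma> \<delta> :: real and k :: nat
    and p C :: 'a and R :: real
  assumes finite_\<tau>: "finite \<tau>" and card_\<tau>: "card \<tau> = k + 2" and flake_\<tau>: "flake \<Gamma> \<tau>"
    and \<Gamma>_pos: "0 < \<Gamma>" and \<Gamma>_le_1: "\<Gamma> \<le> 1"
    and \<mu>_pos: "0 < \<mu>" and \<mu>_le_1: "\<mu> \<le> 1" and \<epsilon>_pos: "0 < \<epsilon>"
    and \<delta>_nonneg: "0 \<le> \<delta>" and \<delta>_small: "\<delta> \<le> \<mu>^2 * \<Gamma>^k / 6"
    and separated_\<tau>: "separated (\<mu> * \<epsilon>) \<tau>"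
    and p: "p \<in> \<tau>" and circ_ball_p: "circ_ball (\<tau> - {p}) C R" and R_less: "R < \<epsilon>"
    and p_near: "\<bar>dist p C - R\<bar> \<le> \<delta> * \<mu> * \<epsilon>"
begin

lemma k_ge_1: "1 \<le> k"
  using flake_card_ne_2[OF flake_\<tau> \<Gamma>_le_1] card_\<tau> by auto

lemma \<Gamma>_pow: "0 < \<Gamma>^k" "\<Gamma>^k \<le> 1"
  using \<Gamma>_pos \<Gamma>_le_1 by (simp_all add: power_le_one)

lemma \<delta>_div_le: "\<delta> / \<Gamma>^k \<le> 1 / 6"
proof -
  have "\<mu>^2 * \<Gamma>^k \<le> \<Gamma>^k"
    using \<mu>_pos \<mu>_le_1 \<Gamma>_pow by (simp add: mult_left_le_one_le power_le_one)
  then have "\<delta> \<le> \<Gamma>^k / 6" using \<delta>_small by linarith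
  then show ?thesis using \<Gamma>_pow by (simp add: divide_le_eq)
qed

lemma R_pos: "0 < R"
  using circ_ball_p by (simp add: circ_ball_def)

lemma dist_C: "v \<in> \<tau> \<Longrightarrow> v \<noteq> p \<Longrightarrow> dist C v = R"
  using circ_ball_p by (simp add: circ_ball_def)

lemma dist_ge: "v \<in> \<tau> \<Longrightarrow> w \<in> \<tau> \<Longrightarrow> v \<noteq> w \<Longrightarrow> \<mu> * \<epsilon> \<le> dist v w"
  using separated_\<tau> by (simp add: separated_def)

lemma card_Diff_two: "v \<in> \<tau> \<Longrightarrow> w \<in> \<tau> \<Longrightarrow> v \<noteq> w \<Longrightarrow> card (\<tau> - {v, w}) = k"
  using finite_\<tau> card_\<tau> by (simp add: card_Diff_subset)

lemma Diff_two_nonempty: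
  assumes "v \<in> \<tau>" "w \<in> \<tau>" "v \<noteq> w"
  obtains u where "u \<in> \<tau>" "u \<noteq> v" "u \<noteq> w"
proof -
  have "\<tau> - {v, w} \<noteq> {}"
    using card_Diff_two[OF assms] k_ge_1 by (metis card.empty not_one_le_zero)
  then show ?thesis using that by blast
qed

lemma other_vertex:
  assumes "v \<in> \<tau>"
  obtains w where "w \<in> \<tau>" "w \<noteq> v"
proof -
  have "card (\<tau> - {v}) = k + 1" using finite_\<tau> card_\<tau> assms by simp
  then have "\<tau> - {v} \<noteq> {}" by (metis add_is_0 card.empty zero_neq_one)
  then show ?thesis using that by blast
qed

lemma \<delta>\<mu>\<epsilon>_le: "\<delta> * \<mu> * \<epsilon> \<le> \<epsilon> / 6"
proof -
  have "\<delta> \<le> 1 / 6" using \<delta>_div_le \<Gamma>_pow \<delta>_nonneg by (simp add: divide_le_eq)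
  then have "\<delta> * \<mu> \<le> 1 / 6"
    using \<mu>_le_1 \<delta>_nonneg mult_left_mono[of \<mu> 1 \<delta>] by linarith
  then show ?thesis using \<epsilon>_pos by (simp add: mult_right_mono)
qed

lemma dist_vertices_le:
  assumes "v \<in> \<tau>" "w \<in> \<tau>"
  shows "dist v w \<le> 2 * R + \<delta> * \<mu> * \<epsilon>"
proof -
  have near: "dist C u \<le> R + \<delta> * \<mu> * \<epsilon>" if "u \<in> \<tau>" for u
    using dist_C[OF that] p_near \<delta>\<mu>\<epsilon>_le \<epsilon>_pos by (cases "u = p") (auto simp: dist_commute)
  show ?thesis
  proof (cases "v = w")
    case True
    then show ?thesis using R_pos \<delta>_nonneg \<mu>_pos \<epsilon>_pos by simp
  next
    case False
    have "dist v w \<le> dist C v + dist C w" by (rule dist_triangle3)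
    moreover have "dist C v + dist C w \<le> 2 * R + \<delta> * \<mu> * \<epsilon>"
    proof (cases "v = p")
      case True
      then show ?thesis using near[OF assms(1)] dist_C[OF assms(2)] False by simp
    next
      case False
      then show ?thesis using near[OF assms(2)] dist_C[OF assms(1)] by simp
    qed
    ultimately show ?thesis by linarith
  qed
qed

lemma diameter_upper: "diameter \<tau> \<le> 13 / 6 * \<epsilon>"
proof -
  have "diameter \<tau> \<le> 2 * R + \<delta> * \<mu> * \<epsilon>"
    using dist_vertices_le p by (intro diameter_le) (auto simp: dist_norm)
  then show ?thesis using R_less \<delta>\<mu>\<epsilon>_le by linarith
qed

lemma dist_le_diameter: "v \<in> \<tau> \<Longrightarrow> w \<in> \<tau> \<Longrightarrow> dist v w \<le> diameter \<tau>"
  using finite_\<tau> by (intro diameter_bounded_bound finite_imp_bounded)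

lemma diameter_lower: "\<mu> * \<epsilon> \<le> diameter \<tau>"
proof -
  obtain w where w: "w \<in> \<tau>" "w \<noteq> p" using other_vertex[OF p] .
  then have "\<mu> * \<epsilon> \<le> dist p w" using dist_ge[OF p] by simp
  then show ?thesis using dist_le_diameter[OF p w(1)] by linarith
qed

lemma face_good:
  assumes "v \<in> \<tau>"
  shows "good \<Gamma> (\<tau> - {v})"
proof -
  obtain w where "w \<in> \<tau>" "w \<noteq> v" using other_vertex[OF assms] .
  then have "\<tau> - {v} \<subset> \<tau>" "\<tau> - {v} \<noteq> {}" using assms by auto
  then show ?thesis using flake_\<tau> unfolding flake_def by blast
qed

lemma face_card: "v \<in> \<tau> \<Longrightarrow> card (\<tau> - {v}) = k + 1"
  using finite_\<tau> card_\<tau> by simp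

lemma face_diameter_ge:
  assumes "v \<in> \<tau>"
  shows "\<mu> * \<epsilon> \<le> diameter (\<tau> - {v})"
proof -
  obtain a where a: "a \<in> \<tau>" "a \<noteq> v" using other_vertex[OF assms] .
  obtain b where b: "b \<in> \<tau>" "b \<noteq> v" "b \<noteq> a" using Diff_two_nonempty[OF assms a(1) a(2)[symmetric]] .
  have "\<mu> * \<epsilon> \<le> dist a b" using dist_ge a b by auto
  also have "\<dots> \<le> diameter (\<tau> - {v})"
    using finite_\<tau> a b by (intro diameter_bounded_bound finite_imp_bounded) auto
  finally show ?thesis .
qed

lemma face_altitude_ge:
  assumes "v \<in> \<tau>" "w \<in> \<tau> - {v}"
  shows "real k * (\<mu> * \<epsilon>) * \<Gamma>^k \<le> altitude w (\<tau> - {v})"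
proof -
  have "real k * (\<mu> * \<epsilon>) \<le> real k * diameter (\<tau> - {v})"
    using face_diameter_ge[OF assms(1)] by (rule mult_left_mono) simp
  then have "real k * (\<mu> * \<epsilon>) * \<Gamma>^k \<le> real k * diameter (\<tau> - {v}) * \<Gamma>^k"
    using \<Gamma>_pow by (simp add: mult_right_mono)
  also have "\<dots> \<le> altitude w (\<tau> - {v})"
    using finite_Diff[OF finite_\<tau>]
    by (rule good_altitude_ge[OF face_good[OF assms(1)] _ face_card[OF assms(1)] k_ge_1 assms(2)])
  finally show ?thesis .
qed

lemma k_mult_\<Gamma>_pow_le: "real k * \<Gamma>^k \<le> 1"
proof -
  obtain a where a: "a \<in> \<tau>" "a \<noteq> p" using other_vertex[OF p] .
  obtain b where b: "b \<in> \<tau>" "b \<noteq> p" "b \<noteq> a" using Diff_two_nonempty[OF p a(1) a(2)[symmetric]] .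
  show ?thesis
    using good_pow_le[OF face_good[OF p] _ face_card[OF p] k_ge_1, of a b] finite_\<tau> a b by auto
qed

text \<open>The flake condition makes one altitude of \<open>\<tau>\<close> small; the exchange lemma transfers this
  to every altitude, because the altitudes of the (good) facets are large.\<close>

lemma altitude_le_diameter:
  assumes v: "v \<in> \<tau>"
  shows "altitude v \<tau> \<le> 2 * (diameter \<tau>)^2 * \<Gamma> / (\<mu> * \<epsilon>)"
proof -
  define L where "L = diameter \<tau>"
  have L: "\<mu> * \<epsilon> \<le> L" "0 < L"
    using diameter_lower mult_pos_pos[OF \<mu>_pos \<epsilon>_pos] by (simp_all add: L_def)
  obtain s where s: "s \<in> \<tau>" "altitude s \<tau> < real (k + 1) * L * \<Gamma>^(k + 1)"
    using flake_thin_vertex[OF flake_\<tau> finite_\<tau> card_\<tau>] L unfolding L_def by blast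
  have "altitude v \<tau> \<le> 2 * L^2 * \<Gamma> / (\<mu> * \<epsilon>)"
  proof (cases "v = s")
    case True
    have "real (k + 1) * \<Gamma>^k \<le> 2" using k_mult_\<Gamma>_pow_le \<Gamma>_pow by (simp add: algebra_simps)
    then have "real (k + 1) * L * \<Gamma>^(k + 1) \<le> 2 * L * \<Gamma>"
      using mult_left_mono[of "real (k + 1) * \<Gamma>^k" 2 "L * \<Gamma>"] L \<Gamma>_pos by (simp add: algebra_simps)
    also have "2 * L * \<Gamma> \<le> 2 * L^2 * \<Gamma> / (\<mu> * \<epsilon>)"
      using mult_left_mono[OF L(1), of "2 * L * \<Gamma>"] L \<Gamma>_pos \<mu>_pos \<epsilon>_pos
      by (simp add: le_divide_eq power2_eq_square algebra_simps)
    finally show ?thesis using True s(2) by simp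
  next
    case False
    define F where "F = \<tau> - {v, s}"
    have F: "F \<noteq> {}" using Diff_two_nonempty[OF v s(1) False] unfolding F_def by blast
    have "\<tau> - {v} = insert s F" "\<tau> - {s} = insert v F" "\<tau> - {v} - {s} = F"
      using s(1) v False by (auto simp: F_def)
    then have exchange:
      "altitude v \<tau> * infdist s (affine hull F) \<le> altitude s \<tau> * infdist v (affine hull F)"
      using infdist_affine_hull_insert_exchange[OF F, of v s] by (simp add: altitude_def)
    have facet: "real k * (\<mu> * \<epsilon>) * \<Gamma>^k \<le> infdist s (affine hull F)"
      using face_altitude_ge[OF v, of s] s(1) False \<open>\<tau> - {v} - {s} = F\<close> by (simp add: altitude_def)
    obtain g where g: "g \<in> F" using F by blast
    have far: "infdist v (affine hull F) \<le> L"
      using infdist_le[OF hull_inc[OF g, where P=affine], of v] dist_le_diameter[OF v, of g] g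
      by (simp add: F_def L_def)
    have alt0: "0 \<le> altitude v \<tau>" "0 \<le> altitude s \<tau>"
      by (simp_all add: altitude_def infdist_nonneg)
    have "altitude v \<tau> * (real k * (\<mu> * \<epsilon>) * \<Gamma>^k) \<le> altitude s \<tau> * L"
      using exchange mult_left_mono[OF facet alt0(1)] mult_left_mono[OF far alt0(2)] by linarith
    also have "\<dots> \<le> real (k + 1) * L * \<Gamma>^(k + 1) * L"
      using mult_right_mono[OF less_imp_le[OF s(2)], of L] L by simp
    also have "\<dots> \<le> 2 * real k * L * \<Gamma>^(k + 1) * L"
      using k_ge_1 L \<Gamma>_pos by (intro mult_right_mono) auto
    also have "\<dots> = (2 * L^2 * \<Gamma> / (\<mu> * \<epsilon>)) * (real k * (\<mu> * \<epsilon>) * \<Gamma>^k)"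
      using \<mu>_pos \<epsilon>_pos by (simp add: power2_eq_square field_simps)
    finally show ?thesis
      by (rule mult_right_le_imp_le) (use k_ge_1 \<mu>_pos \<epsilon>_pos \<Gamma>_pow in simp)
  qed
  then show ?thesis by (simp add: L_def)
qed

lemma altitude_le:
  assumes "v \<in> \<tau>"
  shows "altitude v \<tau> \<le> 169 / 18 * \<Gamma> * \<epsilon> / \<mu>"
proof -
  have "0 \<le> diameter \<tau>" using diameter_lower mult_pos_pos[OF \<mu>_pos \<epsilon>_pos] by linarith
  with diameter_upper have "(diameter \<tau>)^2 \<le> (13 / 6 * \<epsilon>)^2" by (rule power_mono)
  then have "2 * (diameter \<tau>)^2 * \<Gamma> / (\<mu> * \<epsilon>) \<le> 2 * (13 / 6 * \<epsilon>)^2 * \<Gamma> / (\<mu> * \<epsilon>)"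
    using \<Gamma>_pos \<mu>_pos \<epsilon>_pos by (intro divide_right_mono mult_right_mono) auto
  also have "\<dots> = 169 / 18 * \<Gamma> * \<epsilon> / \<mu>"
    using \<epsilon>_pos by (simp add: power2_eq_square field_simps)
  finally show ?thesis using altitude_le_diameter[OF assms] by linarith
qed


lemma power_p_le: "\<bar>(dist C p)^2 - R^2\<bar> \<le> 13 / 6 * \<delta> * \<mu> * \<epsilon>^2"
proof -
  have "(dist C p)^2 - R^2 = (dist p C - R) * (dist p C + R)"
    by (simp add: dist_commute power2_eq_square algebra_simps)
  moreover have "dist p C + R \<le> 13 / 6 * \<epsilon>" using p_near R_less \<delta>\<mu>\<epsilon>_le by linarith
  moreover have "\<bar>dist p C - R\<bar> * (dist p C + R) \<le> \<delta> * \<mu> * \<epsilon> * (13 / 6 * \<epsilon>)"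
    using mult_mono[OF p_near \<open>dist p C + R \<le> 13 / 6 * \<epsilon>\<close>] R_pos
      \<delta>_nonneg \<mu>_pos \<epsilon>_pos by simp
  ultimately have "\<bar>(dist C p)^2 - R^2\<bar> \<le> \<delta> * \<mu> * \<epsilon> * (13 / 6 * \<epsilon>)"
    using R_pos by (simp add: abs_mult)
  then show ?thesis by (simp add: power2_eq_square algebra_simps)
qed

lemma power_p_le_div: "\<bar>(dist C p)^2 - R^2\<bar> \<le> 5 * \<delta> * \<epsilon>^2 / \<Gamma>^k"
proof -
  have "\<delta> * \<epsilon>^2 * \<mu> \<le> \<delta> * \<epsilon>^2"
    using \<delta>_nonneg mult_left_mono[OF \<mu>_le_1, of "\<delta> * \<epsilon>^2"] by simp
  moreover have "13 / 6 * \<delta> * \<mu> * \<epsilon>^2 = 13 / 6 * (\<delta> * \<epsilon>^2 * \<mu>)" by (simp add: mult_ac)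
  moreover have "0 \<le> \<delta> * \<epsilon>^2" using \<delta>_nonneg by simp
  ultimately have "13 / 6 * \<delta> * \<mu> * \<epsilon>^2 \<le> 5 * \<delta> * \<epsilon>^2" by linarith
  also have "\<dots> \<le> 5 * \<delta> * \<epsilon>^2 / \<Gamma>^k"
    using \<delta>_nonneg \<Gamma>_pow by (simp add: le_divide_eq mult_left_le)
  finally show ?thesis using power_p_le by linarith
qed

lemma altitude_p_facet_ge:
  assumes "q \<in> \<tau>" "q \<noteq> p"
  shows "\<mu> * \<epsilon> * \<Gamma>^k \<le> infdist p (affine hull (\<tau> - {p, q}))"
proof -
  have "\<tau> - {q} - {p} = \<tau> - {p, q}" by auto
  then have "real k * (\<mu> * \<epsilon> * \<Gamma>^k) \<le> infdist p (affine hull (\<tau> - {p, q}))"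
    using face_altitude_ge[OF assms(1), of p] p assms(2) by (simp add: altitude_def mult.assoc)
  moreover have "1 * (\<mu> * \<epsilon> * \<Gamma>^k) \<le> real k * (\<mu> * \<epsilon> * \<Gamma>^k)"
    using k_ge_1 \<mu>_pos \<epsilon>_pos \<Gamma>_pow by (intro mult_right_mono) auto
  ultimately show ?thesis by linarith
qed

lemma slope_le:
  assumes "q \<in> \<tau>" "q \<noteq> p"
  shows "\<bar>(dist C p)^2 - R^2\<bar> / infdist p (affine hull (\<tau> - {p, q})) \<le> 13 / 6 * (\<delta> / \<Gamma>^k) * \<epsilon>"
proof -
  have "\<bar>(dist C p)^2 - R^2\<bar> / infdist p (affine hull (\<tau> - {p, q}))
      \<le> (13 / 6 * \<delta> * \<mu> * \<epsilon>^2) / (\<mu> * \<epsilon> * \<Gamma>^k)"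
    using power_p_le altitude_p_facet_ge[OF assms] \<mu>_pos \<epsilon>_pos \<Gamma>_pow \<delta>_nonneg
    by (intro frac_le) auto
  also have "\<dots> = 13 / 6 * (\<delta> / \<Gamma>^k) * \<epsilon>"
    using \<mu>_pos \<epsilon>_pos by (simp add: power2_eq_square field_simps)
  finally show ?thesis .
qed

lemma shift_coefficient_le: "13 / 12 * (\<delta> / \<Gamma>^k) \<le> 3 * \<delta> / (\<mu> * \<Gamma>^k)"
proof -
  define x where "x = \<delta> / \<Gamma>^k"
  have "0 \<le> x" using \<delta>_nonneg \<Gamma>_pow by (simp add: x_def)
  have "3 * x * \<mu> \<le> 3 * x" using mult_left_mono[OF \<mu>_le_1, of "3 * x"] \<open>0 \<le> x\<close> by simp
  then have "13 / 12 * x \<le> 3 * x / \<mu>" using \<open>0 \<le> x\<close> \<mu>_pos by (simp add: le_divide_eq)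
  then show ?thesis by (simp add: x_def mult.commute)
qed

lemma opposite_ball:
  assumes q: "q \<in> \<tau>"
  obtains C' r where "circ_ball (\<tau> - {q}) C' r" "r < (1 + 3 * \<delta> / (\<mu> * \<Gamma>^k)) * \<epsilon>"
    "r \<le> 85 / 72 * \<epsilon>" "\<bar>(dist C' q)^2 - r^2\<bar> \<le> 5 * \<delta> * \<epsilon>^2 / \<Gamma>^k"
proof (cases "q = p")
  case True
  have "\<epsilon> \<le> (1 + 3 * \<delta> / (\<mu> * \<Gamma>^k)) * \<epsilon>"
    using \<delta>_nonneg \<mu>_pos \<Gamma>_pow \<epsilon>_pos by (simp add: algebra_simps)
  then have "R < (1 + 3 * \<delta> / (\<mu> * \<Gamma>^k)) * \<epsilon>" using R_less by linarith
  moreover have "R \<le> 85 / 72 * \<epsilon>" using R_less \<epsilon>_pos by linarith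
  ultimately show ?thesis
    using that[of C R] circ_ball_p power_p_le_div True by simp
next
  case False
  define F where "F = \<tau> - {p, q}"
  obtain v0 where v0: "v0 \<in> F" using Diff_two_nonempty[OF p q False[symmetric]] by (auto simp: F_def)
  then have F: "F \<noteq> {}" by blast
  have distF: "dist C v = R" if "v \<in> F" for v using that dist_C by (simp add: F_def)
  have Dpos: "0 < infdist p (affine hull F)"
    using altitude_p_facet_ge[OF q False] mult_pos_pos[OF mult_pos_pos[OF \<mu>_pos \<epsilon>_pos] \<Gamma>_pow(1)]
    unfolding F_def by linarith
  obtain C' r where C': "0 < r" "\<And>v. v \<in> insert p F \<Longrightarrow> dist C' v = r"
    "r \<le> R + \<bar>(dist C p)^2 - R^2\<bar> / (2 * infdist p (affine hull F))"
    "\<And>x v. v \<in> F \<Longrightarrow> \<bar>((dist C' x)^2 - r^2) - ((dist C x)^2 - R^2)\<bar>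
        \<le> \<bar>(dist C p)^2 - R^2\<bar> / infdist p (affine hull F) * dist v x"
    by (rule equidistant_insert_point[OF F distF Dpos], assumption, rule that)
  have shift: "r \<le> R + 13 / 12 * (\<delta> / \<Gamma>^k) * \<epsilon>"
    using C'(3) slope_le[OF q False] by (simp add: F_def field_simps)
  show ?thesis
  proof (rule that)
    show "circ_ball (\<tau> - {q}) C' r"
      using C'(1,2) p False by (simp add: circ_ball_def F_def insert_absorb)
    have "13 / 12 * (\<delta> / \<Gamma>^k) * \<epsilon> \<le> 3 * \<delta> / (\<mu> * \<Gamma>^k) * \<epsilon>"
      by (rule mult_right_mono[OF shift_coefficient_le]) (use \<epsilon>_pos in simp)
    then show "r < (1 + 3 * \<delta> / (\<mu> * \<Gamma>^k)) * \<epsilon>"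
      unfolding distrib_right using shift R_less by linarith
    show "r \<le> 85 / 72 * \<epsilon>"
      using shift R_less mult_right_mono[OF \<delta>_div_le, of \<epsilon>] \<epsilon>_pos by linarith
    have "dist C q = R" using dist_C q False by blast
    then have "\<bar>(dist C' q)^2 - r^2\<bar> \<le> 13 / 6 * (\<delta> / \<Gamma>^k) * \<epsilon> * dist v0 q"
      using C'(4)[OF v0, of q] mult_right_mono[OF slope_le[OF q False] zero_le_dist[of v0 q]]
      by (simp add: F_def)
    also have "\<dots> \<le> 13 / 6 * (\<delta> / \<Gamma>^k) * \<epsilon> * (13 / 6 * \<epsilon>)"
      using dist_le_diameter[of v0 q] diameter_upper v0 q \<delta>_nonneg \<Gamma>_pow \<epsilon>_pos
      by (intro mult_left_mono) (auto simp: F_def)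
    also have "\<dots> = 169 / 36 * (\<delta> / \<Gamma>^k) * \<epsilon>^2" by (simp add: power2_eq_square)
    also have "\<dots> \<le> 5 * (\<delta> / \<Gamma>^k) * \<epsilon>^2" using \<delta>_nonneg \<Gamma>_pow by (intro mult_right_mono) auto
    also have "\<dots> = 5 * \<delta> * \<epsilon>^2 / \<Gamma>^k" by simp
    finally show "\<bar>(dist C' q)^2 - r^2\<bar> \<le> 5 * \<delta> * \<epsilon>^2 / \<Gamma>^k" .
  qed
qed

lemma opposite_circumradius:
  assumes q: "q \<in> \<tau>"
  shows "\<exists>\<rho>>0. circumradius (\<tau> - {q}) = ereal \<rho> \<and>
     infdist q (circumsphere (\<tau> - {q})) \<le> (84 / \<mu>^3 * (\<delta> / \<Gamma>^k) + 216 / \<mu>^3 * \<Gamma>) * \<rho> \<and>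
     \<rho> < (1 + 3 * \<delta> / (\<mu> * \<Gamma>^k)) * \<epsilon>"
proof -
  obtain C' r where ball': "circ_ball (\<tau> - {q}) C' r" and r: "r < (1 + 3 * \<delta> / (\<mu> * \<Gamma>^k)) * \<epsilon>"
    "r \<le> 85 / 72 * \<epsilon>" and E: "\<bar>(dist C' q)^2 - r^2\<bar> \<le> 5 * \<delta> * \<epsilon>^2 / \<Gamma>^k"
    using opposite_ball[OF q] by blast
  obtain v1 where v1: "v1 \<in> \<tau>" "v1 \<noteq> q" using other_vertex[OF q] .
  obtain v2 where v2: "v2 \<in> \<tau>" "v2 \<noteq> q" "v2 \<noteq> v1" using Diff_two_nonempty[OF q v1(1) v1(2)[symmetric]] .
  have v12: "v1 \<in> \<tau> - {q}" "v2 \<in> \<tau> - {q}" "v1 \<noteq> v2" using v1 v2 by auto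
  obtain cs rs where cs: "cs \<in> affine hull (\<tau> - {q})" "0 < rs" "\<And>v. v \<in> \<tau> - {q} \<Longrightarrow> dist cs v = rs"
    "\<And>a b. a \<in> affine hull (\<tau> - {q}) \<Longrightarrow> b \<in> affine hull (\<tau> - {q}) \<Longrightarrow> (C' - cs) \<bullet> (a - b) = 0"
    "r^2 = (dist C' cs)^2 + rs^2" "circumradius (\<tau> - {q}) = ereal rs" "circumcentre (\<tau> - {q}) = cs"
    by (rule circ_ball_circumcentre[OF v12 ball'], rule that)
  have "rs^2 \<le> r^2" using cs(5) by simp
  then have "rs \<le> r" using ball' power2_le_imp_le[of rs r] by (simp add: circ_ball_def)
  have "\<mu> * \<epsilon> \<le> 2 * rs"
  proof -
    have "\<mu> * \<epsilon> \<le> dist v1 v2" using dist_ge v1 v2 by simp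
    also have "\<dots> \<le> dist v1 cs + dist cs v2" by (rule dist_triangle)
    finally show ?thesis using cs(3)[OF v12(1)] cs(3)[OF v12(2)] by (simp add: dist_commute)
  qed
  define h where "h = infdist q (affine hull (\<tau> - {q}))"
  have h: "h \<le> 169 / 18 * \<Gamma> * \<epsilon> / \<mu>" "h \<le> 13 / 6 * \<epsilon>" "0 \<le> h"
  proof -
    show "h \<le> 169 / 18 * \<Gamma> * \<epsilon> / \<mu>" using altitude_le[OF q] by (simp add: h_def altitude_def)
    have "h \<le> dist q v1" unfolding h_def using v12 by (intro infdist_le hull_inc)
    then show "h \<le> 13 / 6 * \<epsilon>" using dist_le_diameter[OF q v1(1)] diameter_upper by linarith
    show "0 \<le> h" by (simp add: h_def infdist_nonneg)
  qed
  define \<alpha> where "\<alpha> = 84 / \<mu>^3 * (\<delta> / \<Gamma>^k) + 216 / \<mu>^3 * \<Gamma>"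
  define Z where "Z = \<Gamma> * \<epsilon>^2 / \<mu>"
  define W where "W = \<delta> * \<epsilon>^2 / \<Gamma>^k"
  have ZW: "0 \<le> Z" "0 \<le> W" using \<Gamma>_pos \<mu>_pos \<delta>_nonneg \<Gamma>_pow by (simp_all add: Z_def W_def)
  have "W * \<mu> \<le> W" using mult_left_mono[OF \<mu>_le_1 ZW(2)] by simp
  then have "W \<le> W / \<mu>" using \<mu>_pos by (simp add: le_divide_eq)
  have "rs * infdist q (circumsphere (\<tau> - {q})) \<le> h * (rs + 2 * r + h) + 5 * W"
    using circumradius_mult_infdist_circumsphere_le[OF v12 ball', of q] E cs(6)
    by (simp add: h_def W_def)
  also have "\<dots> \<le> (169 / 18 * \<Gamma> * \<epsilon> / \<mu>) * (411 / 72 * \<epsilon>) + 5 * W"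
    using \<open>rs \<le> r\<close> r(2) h cs(2) by (intro add_right_mono mult_mono) auto
  also have "\<dots> \<le> 54 * Z + 21 * W / \<mu>"
    using ZW \<open>W \<le> W / \<mu>\<close> by (simp add: Z_def power2_eq_square)
  also have "\<dots> = \<alpha> * (\<mu> * \<epsilon> / 2)^2"
    using \<mu>_pos \<Gamma>_pow by (simp add: \<alpha>_def Z_def W_def power2_eq_square power3_eq_cube field_simps)
  also have "\<dots> \<le> \<alpha> * rs^2"
    using \<open>\<mu> * \<epsilon> \<le> 2 * rs\<close> \<mu>_pos \<epsilon>_pos \<delta>_nonneg \<Gamma>_pow \<Gamma>_pos
    by (intro mult_left_mono power_mono) (auto simp: \<alpha>_def)
  finally have "infdist q (circumsphere (\<tau> - {q})) \<le> \<alpha> * rs"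
    using cs(2) by (simp add: power2_eq_square mult.assoc)
  then show ?thesis using cs(2,6) \<open>rs \<le> r\<close> r(1) unfolding \<alpha>_def by force
qed

end

lemma forbidden_config_opposite_circumradius:
  fixes P' \<tau> :: "'a::euclidean_space set"
  assumes net: "is_net \<mu> \<epsilon> P'" and "0 < \<Gamma>" "\<Gamma> \<le> 1" "0 \<le> \<delta>"
    and fc: "forbidden_config P' \<mu> \<epsilon> \<Gamma> \<delta> k \<tau>" and "\<delta> \<le> \<mu>^2 * \<Gamma>^k / 6" and "q \<in> \<tau>"
  shows "\<exists>\<rho>>0. circumradius (\<tau> - {q}) = ereal \<rho> \<and>
     infdist q (circumsphere (\<tau> - {q})) \<le> (84 / \<mu>^3 * (\<delta> / \<Gamma>^k) + 216 / \<mu>^3 * \<Gamma>) * \<rho> \<and>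
     \<rho> < (1 + 3 * \<delta> / (\<mu> * \<Gamma>^k)) * \<epsilon>"
proof -
  obtain p C R where "p \<in> \<tau>" "circ_ball (\<tau> - {p}) C R" "R < \<epsilon>" "\<bar>dist p C - R\<bar> \<le> \<delta> * \<mu> * \<epsilon>"
    using fc by (auto simp: forbidden_config_def)
  moreover have "\<tau> \<subseteq> P'" using fc by (simp add: forbidden_config_def)
  then have "finite \<tau>" "separated (\<mu> * \<epsilon>) \<tau>"
    using net finite_subset unfolding is_net_def separated_def by blast+
  ultimately interpret forbidden_flake \<tau> \<mu> \<epsilon> \<Gamma> \<delta> k p C R
    using assms by unfold_locales (auto simp: is_net_def forbidden_config_def)
  show ?thesis using opposite_circumradius[OF \<open>q \<in> \<tau>\<close>] .
qed

lemma hoop_constant_le: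
  fixes \<Gamma> \<delta> \<mu> :: real and k m :: nat
  assumes "k \<le> m" "0 < \<Gamma>" "\<Gamma> \<le> 1" "0 \<le> \<delta>" "0 < \<mu>"
  shows "84 / \<mu>^3 * (\<delta> / \<Gamma>^k) + 216 / \<mu>^3 * \<Gamma> \<le> (6 / \<mu>)^3 * (\<Gamma> + \<delta> / \<Gamma>^m)"
proof -
  have "\<Gamma>^m \<le> \<Gamma>^k" using assms(1-3) by (intro power_decreasing) auto
  then have "\<delta> / \<Gamma>^k \<le> \<delta> / \<Gamma>^m" using assms(2,4) by (intro divide_left_mono) auto
  moreover have "0 \<le> \<delta> / \<Gamma>^k" using assms(2,4) by simp
  ultimately have "84 * (\<delta> / \<Gamma>^k) \<le> 216 * (\<delta> / \<Gamma>^m)" by linarith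
  then have "84 * (\<delta> / \<Gamma>^k) / \<mu>^3 \<le> 216 * (\<delta> / \<Gamma>^m) / \<mu>^3"
    using assms(5) by (intro divide_right_mono) auto
  moreover have "(6 / \<mu>)^3 * (\<Gamma> + \<delta> / \<Gamma>^m) = 216 / \<mu>^3 * \<Gamma> + 216 * (\<delta> / \<Gamma>^m) / \<mu>^3"
    by (simp add: power_divide add_divide_distrib distrib_left)
  ultimately show ?thesis by (simp add: mult.commute)
qed

lemma forbidden_config_hoop:
  fixes P' \<tau> :: "'a::euclidean_space set"
  assumes "is_net \<mu> \<epsilon> P'" "0 < \<Gamma>" "\<Gamma> \<le> 1" "0 \<le> \<delta>"
    and fc: "forbidden_config P' \<mu> \<epsilon> \<Gamma> \<delta> k \<tau>" and small: "\<delta> \<le> \<mu>^2 * \<Gamma>^DIM('a) / 6"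
  shows "hoop ((6 / \<mu>)^3 * (\<Gamma> + \<delta> / \<Gamma>^DIM('a))) \<tau>"
  unfolding hoop_def
proof
  fix q assume q: "q \<in> \<tau>"
  have \<mu>: "0 < \<mu>" and kD: "k \<le> DIM('a)"
    using assms(1) fc by (simp_all add: is_net_def forbidden_config_def)
  have "\<Gamma>^DIM('a) \<le> \<Gamma>^k" using kD assms(2,3) by (intro power_decreasing) auto
  then have "\<mu>^2 * \<Gamma>^DIM('a) \<le> \<mu>^2 * \<Gamma>^k" by (rule mult_left_mono) simp
  then have "\<delta> \<le> \<mu>^2 * \<Gamma>^k / 6" using small by linarith
  then obtain \<rho> where \<rho>: "0 < \<rho>" "circumradius (\<tau> - {q}) = ereal \<rho>"
    "infdist q (circumsphere (\<tau> - {q})) \<le> (84 / \<mu>^3 * (\<delta> / \<Gamma>^k) + 216 / \<mu>^3 * \<Gamma>) * \<rho>"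
    using forbidden_config_opposite_circumradius[OF assms(1-5) _ q] by blast
  have "(84 / \<mu>^3 * (\<delta> / \<Gamma>^k) + 216 / \<mu>^3 * \<Gamma>) * \<rho> \<le> (6 / \<mu>)^3 * (\<Gamma> + \<delta> / \<Gamma>^DIM('a)) * \<rho>"
    using hoop_constant_le[OF kD assms(2-4) \<mu>] \<rho>(1) by (rule mult_right_mono[OF _ less_imp_le])
  then show "circumradius (\<tau> - {q}) < \<infinity> \<and> infdist q (circumsphere (\<tau> - {q}))
      \<le> (6 / \<mu>)^3 * (\<Gamma> + \<delta> / \<Gamma>^DIM('a)) * real_of_ereal (circumradius (\<tau> - {q}))"
    using \<rho>(2,3) by simp
qed

theorem mainTheorem8:
  fixes P' \<tau> :: "'a::euclidean_space set"
    and \<mu>' \<epsilon>' \<Gamma>0 \<delta>0 :: real and k :: nat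
  assumes "is_net \<mu>' \<epsilon>' P'"
    and "0 < \<Gamma>0" and "\<Gamma>0 \<le> 1"
    and "0 \<le> \<delta>0"
    and "forbidden_config P' \<mu>' \<epsilon>' \<Gamma>0 \<delta>0 k \<tau>"
  shows "(\<delta>0 \<le> \<mu>'^2 * \<Gamma>0^k / 6 \<longrightarrow>
           (\<forall>p\<in>\<tau>. circumradius (\<tau> - {p}) < \<infinity> \<and>
              infdist p (circumsphere (\<tau> - {p}))
                \<le> (84 / \<mu>'^3 * (\<delta>0 / \<Gamma>0^k) + 216 / \<mu>'^3 * \<Gamma>0)
                   * real_of_ereal (circumradius (\<tau> - {p})) \<and>
              circumradius (\<tau> - {p}) < ereal ((1 + 3 * \<delta>0 / (\<mu>' * \<Gamma>0^k)) * \<epsilon>')))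
       \<and> (\<delta>0 \<le> \<mu>'^2 * \<Gamma>0^DIM('a) / 6 \<longrightarrow>
           hoop ((6 / \<mu>')^3 * (\<Gamma>0 + \<delta>0 / \<Gamma>0^DIM('a))) \<tau>)"
proof (intro conjI impI)
  show "\<forall>p\<in>\<tau>. circumradius (\<tau> - {p}) < \<infinity> \<and>
      infdist p (circumsphere (\<tau> - {p}))
        \<le> (84 / \<mu>'^3 * (\<delta>0 / \<Gamma>0^k) + 216 / \<mu>'^3 * \<Gamma>0) * real_of_ereal (circumradius (\<tau> - {p})) \<and>
      circumradius (\<tau> - {p}) < ereal ((1 + 3 * \<delta>0 / (\<mu>' * \<Gamma>0^k)) * \<epsilon>')"
    if "\<delta>0 \<le> \<mu>'^2 * \<Gamma>0^k / 6"
    using forbidden_config_opposite_circumradius[OF assms that] by force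
  show "hoop ((6 / \<mu>')^3 * (\<Gamma>0 + \<delta>0 / \<Gamma>0^DIM('a))) \<tau>" if "\<delta>0 \<le> \<mu>'^2 * \<Gamma>0^DIM('a) / 6"
    using forbidden_config_hoop[OF assms that] .
qed

end
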